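(* Let $U:\mathbb R^m_{++}\to\mathbb R$ be a concave NDAS function and let $s^{opt}$ be a maximizer of $U$ over $B_s$. For $i=0,\dots,k$ let $w^i\in W$ have weighted center $(x^i,y^i,s^i)$, let $g^i$ be a supergradient of $U$ at $s^i$, set $g^{iw}=(Y^i)^{-1}g^i$ and $W^i:=\{w:(g^{iw})^\top(w-w^i)\ge0\}\cap W$. Assume $w^i\in\mathrm{relint}\bigl(\bigcap_{j=0}^{i-1}W^j\bigr)$ for $i=1,\dots,k$. Then $$\Bigl(\bigcap_{j=0}^k W^j\Bigr)\cap W_{s^{opt}}\neq\emptyset.$$
   Context: Let $A\in\mathbb R^{m\times n}$ have full column rank $n\le m$ and $b\in\mathbb R^m$ be such that $\{x:Ax\le b\}$ is bounded with nonempty interior. For $w\in\mathbb R^m_{++}$ the weighted center of $w$ is the unique $(x,y,s)$ with $Ax+s=b$, $s>0$, $A^\top y=0$, $\mathrm{Diag}(s)y=w$ ($s$-vector $s$, $y$-vector $y$). Capital letters denote diagonal matrices of vectors. $W=\{w\in\mathbb R^m:w>0,\ e^\top w=1\}$. Centric $s$-vectors are $s$-vectors of weighted centers of elements of $W$; $B_s$ is their set; for centric $s$, $W_s=\{w\in W:$ the $s$-vector of $w$ is $s\}$. Supergradient of concave $U$ at $s^0$: $g$ with $U(s)\le U(s^0)+g^\top(s-s^0)$ for all $s$. A function $f:\mathbb R^m_{++}\to\mathbb R$ is NDAS if for every $d\in\mathbb R^m_{++}$, with $D=\mathrm{Diag}(d)$: (1) $f(s)\le\max\{f(Ds),f(D^{-1}s)\}$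 for all $s\in\mathbb R^m_{++}$; (2) if $f(s^0)\le f(Ds^0)$ for a single $s^0\in\mathbb R^m_{++}$, then $f(s)\le f(Ds)$ for all $s\in\mathbb R^m_{++}$. *)

theory Defs
  imports "HOL-Analysis.Analysis"
begin

definition pos_vecs :: "(real^'m) set" where
  "pos_vecs = {s. \<forall>i. 0 < s $ i}"

definition polytope_P :: "real^'n^'m \<Rightarrow> real^'m \<Rightarrow> (real^'n) set" where
  "polytope_P A b = {x. \<forall>i. (A *v x) $ i \<le> b $ i}"

definition weighted_center ::
  "real^'n^'m \<Rightarrow> real^'m \<Rightarrow> real^'m \<Rightarrow> real^'n \<Rightarrow> real^'m \<Rightarrow> real^'m \<Rightarrow> bool" where
  "weighted_center A b w x y s \<longleftrightarrow>
     A *v x + s = b \<and> (\<forall>i. 0 < s $ i) \<and> transpose A *v y = 0 \<and> (\<forall>i. s $ i * y $ i = w $ i)"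

definition Wsimplex :: "(real^'m) set" where
  "Wsimplex = {w. (\<forall>i. 0 < w $ i) \<and> (\<Sum>i\<in>UNIV. w $ i) = 1}"

definition s_vector :: "real^'n^'m \<Rightarrow> real^'m \<Rightarrow> real^'m \<Rightarrow> real^'m" where
  "s_vector A b w = (THE s. \<exists>x y. weighted_center A b w x y s)"

definition centric_s :: "real^'n^'m \<Rightarrow> real^'m \<Rightarrow> (real^'m) set" where
  "centric_s A b = s_vector A b ` Wsimplex"

definition W_of_s :: "real^'n^'m \<Rightarrow> real^'m \<Rightarrow> real^'m \<Rightarrow> (real^'m) set" where
  "W_of_s A b s = {w \<in> Wsimplex. s_vector A b w = s}"

definition supergradient :: "(real^'m \<Rightarrow> real) \<Rightarrow> real^'m \<Rightarrow> real^'m \<Rightarrow> bool" where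
  "supergradient U s0 g \<longleftrightarrow> (\<forall>s\<in>pos_vecs. U s \<le> U s0 + g \<bullet> (s - s0))"

definition diag_mult :: "real^'m \<Rightarrow> real^'m \<Rightarrow> real^'m" where
  "diag_mult d s = (\<chi> i. d $ i * s $ i)"

definition NDAS :: "(real^'m \<Rightarrow> real) \<Rightarrow> bool" where
  "NDAS f \<longleftrightarrow> (\<forall>d\<in>pos_vecs.
     (\<forall>s\<in>pos_vecs. f s \<le> max (f (diag_mult d s)) (f (diag_mult (\<chi> i. inverse (d $ i)) s))) \<and>
     (\<forall>s0\<in>pos_vecs. f s0 \<le> f (diag_mult d s0) \<longrightarrow> (\<forall>s\<in>pos_vecs. f s \<le> f (diag_mult d s))))"

end

theory Submission imports Defs begin

text \<open>
  Pick a weight \<open>w'\<close> whose center has slack \<open>s_opt\<close>, and an index \<open>m\<close> maximising \<open>U (w j)\<close>.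
  The dual vector \<open>y m\<close> still satisfies \<open>A\<^sup>T y = 0\<close>, so \<open>v = S_opt y m\<close> is a weight with weighted
  center \<open>(x', y m, s_opt)\<close>; its sum is \<open>b \<bullet> y m = s m \<bullet> y m = 1\<close>. Hence \<open>v \<in> W_s_opt\<close>.
  For every \<open>j\<close>, \<open>v / y j\<close> is obtained from \<open>s j\<close> by the diagonal scalings \<open>w m / w j\<close> and
  \<open>s_opt / s m\<close>. Each of them does not decrease \<open>U\<close> at one point (choice of \<open>m\<close>, optimality of
  \<open>s_opt\<close>), hence at every point by NDAS; so \<open>U (s j) \<le> U (v / y j)\<close>, and the supergradient
  inequality puts \<open>v\<close> into the cut of \<open>j\<close>. That \<open>w'\<close> has a weighted center at all (so that
  \<open>s_vector\<close>, a definite description, is meaningful) follows by minimising the weighted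
  logarithmic barrier over the interior of the bounded polytope.
\<close>

definition log_barrier :: "real^'n^'m \<Rightarrow> real^'m \<Rightarrow> real^'m \<Rightarrow> real^'n \<Rightarrow> real" where
  "log_barrier A b w x = - (\<Sum>l\<in>UNIV. w $ l * ln (b $ l - (A *v x) $ l))"

lemma polytope_slack_bounded:
  fixes A :: "real^'n^'m"
  assumes "bounded (polytope_P A b)"
  obtains M where "1 \<le> M" "\<And>x l. x \<in> polytope_P A b \<Longrightarrow> b $ l - (A *v x) $ l \<le> M"
proof -
  obtain B where B: "\<forall>x\<in>polytope_P A b. norm x \<le> B" using assms unfolding bounded_iff by blast
  obtain K where K: "\<And>x. norm (A *v x) \<le> norm x * K" "K > 0"
    using bounded_linear.pos_bounded[OF matrix_vector_mul_bounded_linear[of A]] by blast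
  have "b $ l - (A *v x) $ l \<le> max 1 (norm b + B * K)" if "x \<in> polytope_P A b" for x l
  proof -
    have "\<bar>b $ l\<bar> \<le> norm b" "\<bar>(A *v x) $ l\<bar> \<le> norm (A *v x)" by (rule component_le_norm_cart)+
    moreover have "norm (A *v x) \<le> B * K"
      using K B that by (metis mult_right_mono order_less_imp_le order_trans)
    ultimately show ?thesis by linarith
  qed
  then show thesis using that[of "max 1 (norm b + B * K)"] by simp
qed

lemma log_barrier_sublevel_slack_bounded_below:
  fixes A :: "real^'n^'m"
  assumes "bounded (polytope_P A b)" "\<forall>l. 0 < w $ l"
  obtains \<delta> where "0 < \<delta>"
    "\<And>x l. x \<in> polytope_P A b \<Longrightarrow> \<forall>l. 0 < b $ l - (A *v x) $ l \<Longrightarrow> log_barrier A b w x \<le> c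
      \<Longrightarrow> \<delta> \<le> b $ l - (A *v x) $ l"
proof -
  obtain M where M: "1 \<le> M" "\<And>x l. x \<in> polytope_P A b \<Longrightarrow> b $ l - (A *v x) $ l \<le> M"
    using polytope_slack_bounded[OF assms(1)] by blast
  define e where "e l = ln M - ((\<Sum>l\<in>UNIV. w $ l) * ln M + c) / w $ l" for l
  define \<delta> where "\<delta> = Min (range (\<lambda>l. exp (e l)))"
  have "\<delta> \<le> b $ l - (A *v x) $ l"
    if x: "x \<in> polytope_P A b" "\<forall>l. 0 < b $ l - (A *v x) $ l" "log_barrier A b w x \<le> c" for x l
  proof -
    \<comment> \<open>every summand of \<open>\<Sum> w\<^sub>l (ln M - ln s\<^sub>l)\<close> is nonnegative, so each one is bounded by the sum\<close>
    define h where "h l' = w $ l' * (ln M - ln (b $ l' - (A *v x) $ l'))" for l'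
    have "0 \<le> h l'" for l'
      using M x assms(2) ln_le_cancel_iff[of "b $ l' - (A *v x) $ l'" M]
      unfolding h_def by (simp add: less_imp_le)
    then have "h l \<le> sum h UNIV" by (intro member_le_sum) auto
    also have "sum h UNIV = (\<Sum>l\<in>UNIV. w $ l) * ln M + log_barrier A b w x"
      unfolding h_def log_barrier_def by (simp add: right_diff_distrib sum_subtractf sum_distrib_right)
    finally have "e l \<le> ln (b $ l - (A *v x) $ l)"
      using x(3) assms(2)[rule_format, of l] unfolding h_def e_def by (simp add: field_simps)
    then have "exp (e l) \<le> b $ l - (A *v x) $ l"
      using x(2) by (metis exp_le_cancel_iff exp_ln)
    moreover have "\<delta> \<le> exp (e l)" unfolding \<delta>_def by (rule Min_le) auto
    ultimately show ?thesis by linarith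
  qed
  moreover have "0 < \<delta>" unfolding \<delta>_def by (subst Min_gr_iff) auto
  ultimately show thesis using that by blast
qed

lemma log_barrier_attains_min:
  fixes A :: "real^'n^'m"
  assumes bnd: "bounded (polytope_P A b)" and x0: "\<forall>l. (A *v x0) $ l < b $ l"
    and w: "\<forall>l. 0 < w $ l"
  obtains xm where "\<forall>l. (A *v xm) $ l < b $ l"
    "\<And>z. \<forall>l. (A *v z) $ l < b $ l \<Longrightarrow> log_barrier A b w xm \<le> log_barrier A b w z"
proof -
  let ?f = "log_barrier A b w"
  have feasible: "x \<in> polytope_P A b" if "\<forall>l. (A *v x) $ l < b $ l" for x
    using that unfolding polytope_P_def by (simp add: less_imp_le)
  obtain \<delta> where \<delta>: "0 < \<delta>"
    "\<And>x l. x \<in> polytope_P A b \<Longrightarrow> \<forall>l. 0 < b $ l - (A *v x) $ l \<Longrightarrow> ?f x \<le> ?f x0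
      \<Longrightarrow> \<delta> \<le> b $ l - (A *v x) $ l"
    using log_barrier_sublevel_slack_bounded_below[OF bnd w] by blast
  \<comment> \<open>the sublevel set of \<open>x\<^sub>0\<close> lies in this compact set, on which the barrier is continuous\<close>
  define K where "K = {x. \<forall>l. \<delta> \<le> b $ l - (A *v x) $ l}"
  have K_interior: "(A *v x) $ l < b $ l" if "x \<in> K" for x l
  proof -
    have "\<delta> \<le> b $ l - (A *v x) $ l" using that unfolding K_def by blast
    then show ?thesis using \<delta>(1) by linarith
  qed
  have "K \<subseteq> polytope_P A b" using K_interior feasible by blast
  moreover have "closed K" unfolding K_def
    by (intro closed_Collect_all closed_Collect_le continuous_intros)
  ultimately have "compact K" using bounded_subset[OF bnd] by (simp add: compact_eq_bounded_closed)
  have x0K: "x0 \<in> K" unfolding K_def using \<delta>(2)[OF feasible[OF x0]] x0 by simp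
  have "continuous_on K ?f" unfolding log_barrier_def
  proof (intro continuous_intros ballI)
    fix x l assume "x \<in> K"
    then show "b $ l - (A *v x) $ l \<noteq> 0" using K_interior[of x l] by linarith
  qed
  then obtain xm where xm: "xm \<in> K" "\<forall>z\<in>K. ?f xm \<le> ?f z"
    using continuous_attains_inf[OF \<open>compact K\<close>] x0K by blast
  have "?f xm \<le> ?f z" if z: "\<forall>l. (A *v z) $ l < b $ l" for z
  proof (cases "?f z \<le> ?f x0")
    case True
    then have "z \<in> K" unfolding K_def using \<delta>(2)[OF feasible[OF z]] z by simp
    then show ?thesis using xm by blast
  next
    case False
    then show ?thesis using xm x0K by fastforce
  qed
  then show thesis using that K_interior[OF xm(1)] by blast
qed

text \<open>First-order optimality of the barrier at an interior minimiser is the dual condition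
  \<open>A\<^sup>T (w / s) = 0\<close>.\<close>
lemma log_barrier_min_weighted_center:
  fixes A :: "real^'n^'m"
  assumes xm: "\<forall>l. (A *v xm) $ l < b $ l"
    and min: "\<And>z. \<forall>l. (A *v z) $ l < b $ l \<Longrightarrow> log_barrier A b w xm \<le> log_barrier A b w z"
  shows "weighted_center A b w xm (\<chi> l. w $ l / (b $ l - (A *v xm) $ l)) (b - A *v xm)"
proof -
  define y where "y = (\<chi> l. w $ l / (b $ l - (A *v xm) $ l))"
  define S where "S = (\<Inter>l. {x. (A *v x) $ l < b $ l})"
  have "open S" unfolding S_def
    by (intro open_INT finite ballI open_Collect_less continuous_intros)
  have dA: "((\<lambda>x. (A *v x) $ l) has_derivative (\<lambda>v. (A *v v) $ l)) (at x)" for l x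
    by (rule bounded_linear_imp_has_derivative)
       (rule bounded_linear_compose[OF bounded_linear_vec_nth matrix_vector_mul_bounded_linear])
  have "(log_barrier A b w has_derivative
      (\<lambda>v. - (\<Sum>l\<in>UNIV. w $ l * ((0 - (A *v v) $ l) * inverse (b $ l - (A *v xm) $ l))))) (at xm)"
    unfolding log_barrier_def
    by (intro has_derivative_minus has_derivative_sum has_derivative_mult_right has_derivative_ln
        has_derivative_diff has_derivative_const dA) (use xm in auto)
  from differential_zero_maxmin[OF _ \<open>open S\<close> this]
  have "(\<lambda>v. - (\<Sum>l\<in>UNIV. w $ l * ((0 - (A *v v) $ l) * inverse (b $ l - (A *v xm) $ l))))
      = (\<lambda>v. 0)" (is "?Df = _")
    using xm min unfolding S_def by blast
  then have "(\<Sum>l\<in>UNIV. y $ l * (A *v v) $ l) = 0" for v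
    using fun_cong[of ?Df _ v] unfolding y_def by (simp add: field_simps sum_negf)
  then have "y \<bullet> (A *v v) = 0" for v by (simp add: inner_vec_def)
  from this[of "y v* A"] have "(y v* A) \<bullet> (y v* A) = 0"
    by (simp add: dot_lmul_matrix)
  then have "transpose A *v y = 0" by simp
  then show ?thesis
    unfolding weighted_center_def y_def using xm by (auto simp: less_le) (metis order_refl)+
qed

lemma weighted_center_exists:
  fixes A :: "real^'n^'m"
  assumes "bounded (polytope_P A b)" "A *v x0 + s0 = b" "\<forall>l. 0 < s0 $ l" "\<forall>l. 0 < w $ l"
  shows "\<exists>x y s. weighted_center A b w x y s"
proof -
  have "(A *v x0) $ l < b $ l" for l
  proof -
    have "(A *v x0) $ l + s0 $ l = b $ l" using arg_cong[OF assms(2), of "\<lambda>v. v $ l"] by simp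
    then show ?thesis using assms(3)[rule_format, of l] by linarith
  qed
  then obtain xm where "\<forall>l. (A *v xm) $ l < b $ l"
    "\<And>z. \<forall>l. (A *v z) $ l < b $ l \<Longrightarrow> log_barrier A b w xm \<le> log_barrier A b w z"
    using log_barrier_attains_min[OF assms(1) _ assms(4)] by blast
  then show ?thesis using log_barrier_min_weighted_center by blast
qed

lemma slack_inner_dual:
  fixes A :: "real^'n^'m"
  assumes "A *v x + s = b" "transpose A *v y = 0"
  shows "s \<bullet> y = b \<bullet> y"
proof -
  have "(transpose A *v y) \<bullet> x = y \<bullet> (A *v x)"
    by (simp add: dot_lmul_matrix)
  then have "(A *v x) \<bullet> y = 0" using assms(2) by (simp add: inner_commute)
  moreover have "s = b - A *v x" using assms(1) by (auto simp: algebra_simps)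
  ultimately show ?thesis by (simp add: inner_diff_left)
qed

lemma weighted_center_dual_pos:
  assumes "weighted_center A b w x y s" "0 < w $ l"
  shows "0 < y $ l"
proof -
  have "0 < s $ l" "s $ l * y $ l = w $ l" using assms(1) unfolding weighted_center_def by blast+
  then show ?thesis using assms(2) zero_less_mult_pos by metis
qed

lemma weighted_center_slack_unique:
  assumes wc: "weighted_center A b w x y s" "weighted_center A b w x' y' s'"
    and w: "\<forall>l. 0 < w $ l"
  shows "s = s'"
proof -
  have s: "\<forall>l. 0 < s $ l" "\<forall>l. 0 < s' $ l" "\<forall>l. s $ l * y $ l = w $ l" "\<forall>l. s' $ l * y' $ l = w $ l"
    using wc unfolding weighted_center_def by blast+
  \<comment> \<open>\<open>s - s'\<close> lies in the range of \<open>A\<close>, \<open>y - y'\<close> in the kernel of \<open>A\<^sup>T\<close>\<close>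
  have "(s - s') \<bullet> (y - y') = 0"
    using wc slack_inner_dual[of A x s b] slack_inner_dual[of A x' s' b]
    unfolding weighted_center_def by (simp add: inner_diff_left inner_diff_right)
  then have "(\<Sum>l\<in>UNIV. (s $ l - s' $ l) * (y $ l - y' $ l)) = 0" by (simp add: inner_vec_def)
  moreover have summand: "(s $ l - s' $ l) * (y $ l - y' $ l) = - (w $ l * (s $ l - s' $ l)\<^sup>2 / (s $ l * s' $ l))" for l
  proof -
    have "y $ l = w $ l / s $ l" "y' $ l = w $ l / s' $ l"
      using s by (metis less_irrefl nonzero_mult_div_cancel_left)+
    then show ?thesis using s(1,2)[rule_format, of l] by (simp add: field_simps power2_eq_square)
  qed
  ultimately have "(\<Sum>l\<in>UNIV. w $ l * (s $ l - s' $ l)\<^sup>2 / (s $ l * s' $ l)) = 0"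
    by (simp add: sum_negf)
  moreover have "0 \<le> w $ l * (s $ l - s' $ l)\<^sup>2 / (s $ l * s' $ l)" for l
    using s(1,2) w by (simp add: less_imp_le)
  ultimately have "w $ l * (s $ l - s' $ l)\<^sup>2 / (s $ l * s' $ l) = 0" for l
    by (simp add: sum_nonneg_eq_0_iff)
  then show ?thesis using s(1,2) w by (simp add: vec_eq_iff) (metis less_irrefl)
qed

lemma s_vector_eq:
  assumes "weighted_center A b w x y s" "\<forall>l. 0 < w $ l"
  shows "s_vector A b w = s"
  unfolding s_vector_def
proof (rule the_equality)
  show "\<exists>x y. weighted_center A b w x y s" using assms(1) by blast
next
  fix s' assume "\<exists>x y. weighted_center A b w x y s'"
  then show "s' = s" using weighted_center_slack_unique[OF _ assms(1) assms(2)] by blast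
qed

lemma weighted_center_centric:
  assumes "weighted_center A b w x y s" "w \<in> Wsimplex"
  shows "s \<in> centric_s A b"
  using assms s_vector_eq[OF assms(1)] unfolding centric_s_def Wsimplex_def by force

lemma weighted_center_swap_slack:
  assumes wc: "weighted_center A b w x y s" "weighted_center A b w' x' y' s'" and w: "w \<in> Wsimplex"
  shows "(\<chi> l. s' $ l * y $ l) \<in> W_of_s A b s'"
proof -
  let ?v = "\<chi> l. s' $ l * y $ l"
  have pos: "0 < ?v $ l" for l
    using wc w weighted_center_dual_pos[OF wc(1)] unfolding weighted_center_def Wsimplex_def by simp
  have "(\<Sum>l\<in>UNIV. ?v $ l) = s' \<bullet> y" by (simp add: inner_vec_def)
  also have "\<dots> = s \<bullet> y"
    using wc slack_inner_dual[of A x' s' b y] slack_inner_dual[of A x s b y]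
    unfolding weighted_center_def by simp
  also have "\<dots> = 1" using wc(1) w unfolding weighted_center_def Wsimplex_def by (simp add: inner_vec_def)
  finally have "?v \<in> Wsimplex" unfolding Wsimplex_def using pos by blast
  moreover have "weighted_center A b ?v x' y s'" using wc unfolding weighted_center_def by simp
  ultimately show ?thesis unfolding W_of_s_def using s_vector_eq pos by blast
qed

lemma NDAS_ratio_scaling_mono:
  assumes "NDAS f" "a \<in> pos_vecs" "a' \<in> pos_vecs" "f a \<le> f a'" "s \<in> pos_vecs"
  shows "f s \<le> f (diag_mult (\<chi> l. a' $ l / a $ l) s)"
proof -
  have "(\<chi> l. a' $ l / a $ l) \<in> pos_vecs" using assms(2,3) unfolding pos_vecs_def by simp
  moreover have "diag_mult (\<chi> l. a' $ l / a $ l) a = a'"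
    using assms(2) unfolding diag_mult_def pos_vecs_def by (simp add: vec_eq_iff) (metis less_irrefl)
  ultimately show ?thesis using assms unfolding NDAS_def by metis
qed

lemma supergradient_weight_cut:
  assumes wc: "weighted_center A b w x y s" and w: "\<forall>l. 0 < w $ l"
    and g: "supergradient U s g" and v: "v \<in> pos_vecs" and le: "U s \<le> U (\<chi> l. v $ l / y $ l)"
  shows "0 \<le> (\<chi> l. g $ l / y $ l) \<bullet> (v - w)"
proof -
  let ?z = "\<chi> l. v $ l / y $ l"
  have y: "0 < y $ l" for l using weighted_center_dual_pos[OF wc] w by blast
  then have "?z \<in> pos_vecs" using v unfolding pos_vecs_def by simp
  then have "0 \<le> g \<bullet> (?z - s)" using g le unfolding supergradient_def by fastforce
  moreover have "g $ l / y $ l * (v $ l - w $ l) = g $ l * (?z $ l - s $ l)" for l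
    using wc y[of l] unfolding weighted_center_def by (simp add: field_simps)
  ultimately show ?thesis by (simp add: inner_vec_def)
qed

text \<open>\<open>S' Y\<^sub>1 Y\<^sup>-\<^sup>1 = (S' S\<^sub>1\<^sup>-\<^sup>1) (W\<^sub>1 W\<^sup>-\<^sup>1) S\<close>: two diagonal scalings, each of which does not
  decrease \<open>U\<close> at one point and hence at every point.\<close>
lemma NDAS_le_rescaled_center:
  assumes U: "NDAS U"
    and wc: "weighted_center A b w x y s" "weighted_center A b w\<^sub>1 x\<^sub>1 y\<^sub>1 s\<^sub>1"
    and w: "w \<in> pos_vecs" "w\<^sub>1 \<in> pos_vecs" and s': "s' \<in> pos_vecs"
    and le: "U w \<le> U w\<^sub>1" "U s\<^sub>1 \<le> U s'"
  shows "U s \<le> U (\<chi> l. s' $ l * y\<^sub>1 $ l / y $ l)"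
proof -
  have s: "s \<in> pos_vecs" "s\<^sub>1 \<in> pos_vecs" using wc unfolding weighted_center_def pos_vecs_def by blast+
  let ?d = "\<chi> l. w\<^sub>1 $ l / w $ l"
  have ds: "diag_mult ?d s \<in> pos_vecs"
    using s w unfolding pos_vecs_def diag_mult_def by (auto intro!: divide_pos_pos mult_pos_pos)
  have "U s \<le> U (diag_mult ?d s)"
    using NDAS_ratio_scaling_mono[OF U w le(1) s(1)] .
  also have "\<dots> \<le> U (diag_mult (\<chi> l. s' $ l / s\<^sub>1 $ l) (diag_mult ?d s))"
    using NDAS_ratio_scaling_mono[OF U s(2) s' le(2) ds] .
  also have "diag_mult (\<chi> l. s' $ l / s\<^sub>1 $ l) (diag_mult ?d s) = (\<chi> l. s' $ l * y\<^sub>1 $ l / y $ l)"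
  proof -
    have "s' $ l / s\<^sub>1 $ l * (w\<^sub>1 $ l / w $ l * s $ l) = s' $ l * y\<^sub>1 $ l / y $ l" for l
    proof -
      have "w $ l = s $ l * y $ l" "w\<^sub>1 $ l = s\<^sub>1 $ l * y\<^sub>1 $ l"
        using wc unfolding weighted_center_def by simp_all
      moreover have "0 < s $ l" "0 < s\<^sub>1 $ l" "0 < w $ l"
        using s w unfolding pos_vecs_def by simp_all
      ultimately show ?thesis by (simp add: field_simps)
    qed
    then show ?thesis unfolding diag_mult_def by (simp add: vec_eq_iff)
  qed
  finally show ?thesis .
qed

theorem proposition3p2:
  fixes A :: "real^'n^'m" and b :: "real^'m" and U :: "real^'m \<Rightarrow> real"
    and s_opt :: "real^'m" and k :: nat
    and w :: "nat \<Rightarrow> real^'m" and x :: "nat \<Rightarrow> real^'n"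
    and y s g :: "nat \<Rightarrow> real^'m"
  assumes rankA: "rank A = CARD('n)"
    and bnd: "bounded (polytope_P A b)"
    and intP: "interior (polytope_P A b) \<noteq> {}"
    and conc: "concave_on pos_vecs U"
    and ndas: "NDAS U"
    and sopt: "s_opt \<in> centric_s A b" "\<forall>s'\<in>centric_s A b. U s' \<le> U s_opt"
    and wW: "\<forall>i\<le>k. w i \<in> Wsimplex"
    and wc: "\<forall>i\<le>k. weighted_center A b (w i) (x i) (y i) (s i)"
    and sg: "\<forall>i\<le>k. supergradient U (s i) (g i)"
    and relint: "\<forall>i. 1 \<le> i \<and> i \<le> k \<longrightarrow>
        w i \<in> rel_interior (\<Inter>j<i. {v. (\<chi> l. g j $ l / y j $ l) \<bullet> (v - w j) \<ge> 0} \<inter> Wsimplex)"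
  shows "(\<Inter>j\<le>k. {v. (\<chi> l. g j $ l / y j $ l) \<bullet> (v - w j) \<ge> 0} \<inter> Wsimplex)
           \<inter> W_of_s A b s_opt \<noteq> {}"
proof -
  have wpos: "w i \<in> pos_vecs" if "i \<le> k" for i using wW that unfolding Wsimplex_def pos_vecs_def by blast
  obtain w' where w': "w' \<in> Wsimplex" "s_opt = s_vector A b w'"
    using sopt(1) unfolding centric_s_def by blast
  then have w'pos: "\<forall>l. 0 < w' $ l" unfolding Wsimplex_def by blast
  obtain x' y' s' where wc': "weighted_center A b w' x' y' s'"
    using weighted_center_exists[OF bnd _ _ w'pos] wc unfolding weighted_center_def by blast
  have wc_opt: "weighted_center A b w' x' y' s_opt" using wc' s_vector_eq[OF wc' w'pos] w'(2) by simp
  obtain m where m: "m \<le> k" "\<forall>j\<le>k. U (w j) \<le> U (w m)"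
  proof -
    let ?M = "Max ((\<lambda>j. U (w j)) ` {..k})"
    have "?M \<in> (\<lambda>j. U (w j)) ` {..k}" by (intro Max_in) auto
    moreover have "\<forall>j\<le>k. U (w j) \<le> ?M" by simp
    ultimately show thesis using that by fastforce
  qed
  define v where "v = (\<chi> l. s_opt $ l * y m $ l)"
  have v: "v \<in> W_of_s A b s_opt" unfolding v_def using weighted_center_swap_slack wc wW m(1) wc_opt by blast
  then have vpos: "v \<in> pos_vecs" unfolding W_of_s_def Wsimplex_def pos_vecs_def by blast
  have "0 \<le> (\<chi> l. g j $ l / y j $ l) \<bullet> (v - w j)" if j: "j \<le> k" for j
  proof (rule supergradient_weight_cut[OF _ _ _ vpos])
    have "U (s m) \<le> U s_opt" using sopt(2) weighted_center_centric wc wW m(1) by blast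
    moreover have "s_opt \<in> pos_vecs" using wc_opt unfolding weighted_center_def pos_vecs_def by blast
    ultimately have "U (s j) \<le> U (\<chi> l. s_opt $ l * y m $ l / y j $ l)"
      using NDAS_le_rescaled_center[OF ndas wc[rule_format, OF j] wc[rule_format, OF m(1)]]
        wpos j m by blast
    then show "U (s j) \<le> U (\<chi> l. v $ l / y j $ l)" by (simp add: v_def)
  qed (use wc sg wpos j in \<open>auto simp: pos_vecs_def\<close>)
  then show ?thesis using v unfolding W_of_s_def by blast
qed

end
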